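(* Let $N\subset M\subset G$ be subgroups with $N$ normal in $G$, and let $P:=\prod_{e\in E}T_e^ML_e^N$. Then for every vertex $v$ and every face $f$, $|M|\,P A_v^M P=|G|\,P A_v P$ and $P B_f^N P=|N|\,P B_f P$.
   Context: Setting. $G$ is a finite group; $\bar g$ denotes $g^{-1}$. A lattice is embedded in an orientable surface, with vertex set $V$, edge set $E$, face set $F$; every edge is oriented, no edge has equal endpoints, and a face with $s$ edges has $s$ distinct vertices (same conditions for the dual lattice). Dual edges $e^*$ are oriented so that $e^*$ crosses $e$ from right to left. For each edge $e$ there is an inverse edge $\bar e$ with reversed orientation ($\bar{\bar e}=e$); $\bar E$ is the set of inverse edges. Each edge $e\in E$ carries a qudit $\mathbb C[G]$ with orthonormal basis $\{|g\rangle\}_{g\in G}$; $\mathcal H_G=\bigotimes_{e\in E}\mathbb C[G]$. Single-qudit operators: $L^h=\sum_g|hg\rangle\langle g|$, $T^g=|g\rangle\langle g|$, $I=\sum_g|\bar g\rangle\langle g|$. Sites and triangles. A site is a pair $s=(v,f)$ with $f$ a face and $v$ a vertex of $f$; write $s=(v_s,f_s)$. A direct triangle $\tau=(s_0,s_1,e)$ consists of sites $s_0,s_1$ with $f_{s_0}=f_{s_1}$ and $e\in E\cup\bar E$ going from $v_{s_0}$ to $v_{s_1}$, such that $s_0,s_1,e$ form a triangle with sides in counterclockwise order. A dual triangle $\tau=(s_0,s_1,e^* )$ consists of sites with $v_{s_0}=v_{s_1}$ and a dual edge $e^*$ ($e\in E\cup\bar E$) going from the dual vertex $f_{s_0}^*$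 to $f_{s_1}^*$, with sides in clockwise order. Write $\partial_i\tau=s_i$, $e_\tau=e$. Triangle operators: for a dual triangle $L_\tau^h:=I^xL^hI^x$, for a direct triangle $T_\tau^g:=I^xT^gI^x$, acting on the qudit of the underlying edge of $e_\tau$, with $x=0$ if $e_\tau\in E$ and $x=1$ if $e_\tau\in\bar E$. Vertex and face operators. For a vertex $v$ and $g\in G$, $A_v^g$ acts on the qudits of the edges incident to $v$ by $|x\rangle\mapsto|gx\rangle$ for edges pointing into... more precisely, on each edge $e$ incident to $v$ it acts as $L_\tau^g$ for the dual triangle $\tau$ around $v$ crossing $e$ (i.e. left multiplication by $g$ on edges whose head/tail convention matches, right multiplication by $\bar g$ otherwise), and $A_v^gA_v^{g'}=A_v^{gg'}$. For a site $s=(v,f)$, $B_s^g$ is the projector onto states for which the ordered product of the edge values (inverted when the edge is traversed against its orientation) along the boundary of $f$, starting and ending at $v$ and going once around $f$ counterclockwise, equals $g$. Set $A_v:=\frac1{|G|}\sum_{h\in G}A_v^h$, $A_v^M:=\frac1{|M|}\sum_{m\in M}A_v^m$, $B_f:=B_s^1$, $B_f^N:=\sum_{n\in N}B_s^n$ (both independent of the choice of $s=(v,f)$). Edge operators. For an edge $e$, $L_e^N:=\frac1{|N|}\sum_{n\in N}L_\tau^n$ for any dual triangle $\tau$ with $e_\tau\in\{e,\bar e\}$ (independent of the choice since $N$ is normal), and $T_e^M:=\sum_{m\in M}T_{\tau'}^m$ for any direct triangle $\tau'$ with $e_{\tau'}\in\{e,\bar e\}$; i.e. $T_e^M$ projects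 the qudit of $e$ onto $\mathrm{span}\{|m\rangle:m\in M\}$. *)

theory Defs
  imports "HOL-Algebra.Algebra" "HOL-Library.FuncSet"
begin

section \<open>Lattice (cellular embedding in an oriented surface), combinatorial data\<close>

text \<open>A dart is a pair (e, b): (e, True) is the
edge e itself, (e, False) is its inverse edge. src e / tgt e are the tail / head of e.
bd f lists the boundary darts of the face f in counterclockwise order (a closed walk).\<close>

definition dstart :: "('e \<Rightarrow> 'v) \<Rightarrow> ('e \<Rightarrow> 'v) \<Rightarrow> 'e \<times> bool \<Rightarrow> 'v" where
  "dstart src tgt d = (if snd d then src (fst d) else tgt (fst d))"

definition dend :: "('e \<Rightarrow> 'v) \<Rightarrow> ('e \<Rightarrow> 'v) \<Rightarrow> 'e \<times> bool \<Rightarrow> 'v" where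
  "dend src tgt d = (if snd d then tgt (fst d) else src (fst d))"

definition lattice ::
  "'e set \<Rightarrow> ('e \<Rightarrow> 'v) \<Rightarrow> ('e \<Rightarrow> 'v) \<Rightarrow> 'f set \<Rightarrow> ('f \<Rightarrow> ('e \<times> bool) list) \<Rightarrow> bool" where
  "lattice E src tgt F bd \<longleftrightarrow>
     finite E \<and> finite F \<and>
     (\<forall>e\<in>E. src e \<noteq> tgt e) \<and>
     (\<forall>f\<in>F. bd f \<noteq> [] \<and> set (bd f) \<subseteq> E \<times> UNIV \<and>
        (\<forall>i<length (bd f). dend src tgt (bd f ! i) = dstart src tgt (bd f ! (Suc i mod length (bd f)))) \<and>
        distinct (map (dstart src tgt) (bd f))) \<and>
     (\<forall>d\<in>E \<times> UNIV. \<exists>!f. f \<in> F \<and> d \<in> set (bd f)) \<and>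
     (\<forall>f\<in>F. \<forall>e. \<not> ((e, True) \<in> set (bd f) \<and> (e, False) \<in> set (bd f)))"

definition vertices :: "'e set \<Rightarrow> ('e \<Rightarrow> 'v) \<Rightarrow> ('e \<Rightarrow> 'v) \<Rightarrow> 'v set" where
  "vertices E src tgt = src ` E \<union> tgt ` E"

section \<open>Operators on the Hilbert space of configurations\<close>

text \<open>Basis states of \<open>\<otimes>_{e\<in>E} C[G]\<close> are configurations E \<rightarrow> G (extensional).
Operators are represented by their matrices, vanishing outside configurations.\<close>

type_synonym ('e, 'g) op = "('e \<Rightarrow> 'g) \<Rightarrow> ('e \<Rightarrow> 'g) \<Rightarrow> complex"

definition confs :: "('g, 'b) monoid_scheme \<Rightarrow> 'e set \<Rightarrow> ('e \<Rightarrow> 'g) set" where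
  "confs G E = (E \<rightarrow>\<^sub>E carrier G)"

definition opmul :: "('g, 'b) monoid_scheme \<Rightarrow> 'e set \<Rightarrow> ('e, 'g) op \<Rightarrow> ('e, 'g) op \<Rightarrow> ('e, 'g) op" where
  "opmul G E A B = (\<lambda>x y. if x \<in> confs G E \<and> y \<in> confs G E
      then (\<Sum>z\<in>confs G E. A x z * B z y) else 0)"

definition opid :: "('g, 'b) monoid_scheme \<Rightarrow> 'e set \<Rightarrow> ('e, 'g) op" where
  "opid G E = (\<lambda>x y. if x \<in> confs G E \<and> y \<in> confs G E \<and> x = y then 1 else 0)"

definition smul :: "complex \<Rightarrow> ('e, 'g) op \<Rightarrow> ('e, 'g) op" where
  "smul c A = (\<lambda>x y. c * A x y)"

definition permop :: "('g, 'b) monoid_scheme \<Rightarrow> 'e set \<Rightarrow> (('e \<Rightarrow> 'g) \<Rightarrow> ('e \<Rightarrow> 'g)) \<Rightarrow> ('e, 'g) op" where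
  "permop G E phi = (\<lambda>x y. if x \<in> confs G E \<and> y \<in> confs G E \<and> x = phi y then 1 else 0)"

definition diagop :: "('g, 'b) monoid_scheme \<Rightarrow> 'e set \<Rightarrow> (('e \<Rightarrow> 'g) \<Rightarrow> bool) \<Rightarrow> ('e, 'g) op" where
  "diagop G E p = (\<lambda>x y. if x \<in> confs G E \<and> y \<in> confs G E \<and> x = y \<and> p y then 1 else 0)"

text \<open>Value of a dart: the edge value, inverted for an inverse edge (i.e. the action of I^x).\<close>
definition dval :: "('g, 'b) monoid_scheme \<Rightarrow> ('e \<Rightarrow> 'g) \<Rightarrow> 'e \<times> bool \<Rightarrow> 'g" where
  "dval G y d = (if snd d then y (fst d) else inv\<^bsub>G\<^esub> (y (fst d)))"

text \<open>I^x L^h I^x on the qudit of the underlying edge of the dart d (as a map on basis states).\<close>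
definition Ldart_map :: "('g, 'b) monoid_scheme \<Rightarrow> 'e \<times> bool \<Rightarrow> 'g \<Rightarrow> ('e \<Rightarrow> 'g) \<Rightarrow> ('e \<Rightarrow> 'g)" where
  "Ldart_map G d h y = y(fst d := (if snd d then h \<otimes>\<^bsub>G\<^esub> y (fst d)
                                   else inv\<^bsub>G\<^esub> (h \<otimes>\<^bsub>G\<^esub> inv\<^bsub>G\<^esub> (y (fst d)))))"

definition Ltri :: "('g, 'b) monoid_scheme \<Rightarrow> 'e set \<Rightarrow> 'e \<times> bool \<Rightarrow> 'g \<Rightarrow> ('e, 'g) op" where
  "Ltri G E d h = permop G E (Ldart_map G d h)"

text \<open>I^x T^g I^x on the qudit of the underlying edge of the dart d.\<close>
definition Ttri :: "('g, 'b) monoid_scheme \<Rightarrow> 'e set \<Rightarrow> 'e \<times> bool \<Rightarrow> 'g \<Rightarrow> ('e, 'g) op" where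
  "Ttri G E d g = diagop G E (\<lambda>y. dval G y d = g)"

text \<open>A_v^g: on each edge e incident to v acts as L_tau^g for the dual triangle tau around v
crossing e; with the paper's orientation conventions e_tau = e if e points away from v and
e_tau = inverse of e if e points into v (i.e. e_tau is the dart starting at v).
Since no edge is a loop and the edges are distinct, these act on distinct qudits and
commute; we apply them simultaneously.\<close>
definition vertex_map ::
  "('g, 'b) monoid_scheme \<Rightarrow> 'e set \<Rightarrow> ('e \<Rightarrow> 'v) \<Rightarrow> ('e \<Rightarrow> 'v) \<Rightarrow> 'v \<Rightarrow> 'g \<Rightarrow> ('e \<Rightarrow> 'g) \<Rightarrow> ('e \<Rightarrow> 'g)" where
  "vertex_map G E src tgt v g y = (\<lambda>e. if e \<in> E \<and> src e = v then g \<otimes>\<^bsub>G\<^esub> y e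
        else if e \<in> E \<and> tgt e = v then inv\<^bsub>G\<^esub> (g \<otimes>\<^bsub>G\<^esub> inv\<^bsub>G\<^esub> (y e))
        else y e)"

definition Avg :: "('g, 'b) monoid_scheme \<Rightarrow> 'e set \<Rightarrow> ('e \<Rightarrow> 'v) \<Rightarrow> ('e \<Rightarrow> 'v) \<Rightarrow> 'v \<Rightarrow> 'g \<Rightarrow> ('e, 'g) op" where
  "Avg G E src tgt v g = permop G E (vertex_map G E src tgt v g)"

definition AvK :: "('g, 'b) monoid_scheme \<Rightarrow> 'e set \<Rightarrow> ('e \<Rightarrow> 'v) \<Rightarrow> ('e \<Rightarrow> 'v) \<Rightarrow> 'g set \<Rightarrow> 'v \<Rightarrow> ('e, 'g) op" where
  "AvK G E src tgt K v = (\<lambda>x y. (1 / of_nat (card K)) * (\<Sum>k\<in>K. Avg G E src tgt v k x y))"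

definition Av :: "('g, 'b) monoid_scheme \<Rightarrow> 'e set \<Rightarrow> ('e \<Rightarrow> 'v) \<Rightarrow> ('e \<Rightarrow> 'v) \<Rightarrow> 'v \<Rightarrow> ('e, 'g) op" where
  "Av G E src tgt v = AvK G E src tgt (carrier G) v"

definition holonomy :: "('g, 'b) monoid_scheme \<Rightarrow> ('e \<Rightarrow> 'g) \<Rightarrow> ('e \<times> bool) list \<Rightarrow> 'g" where
  "holonomy G y ds = foldr (\<lambda>d acc. dval G y d \<otimes>\<^bsub>G\<^esub> acc) ds \<one>\<^bsub>G\<^esub>"

definition site_word ::
  "('e \<Rightarrow> 'v) \<Rightarrow> ('e \<Rightarrow> 'v) \<Rightarrow> ('f \<Rightarrow> ('e \<times> bool) list) \<Rightarrow> 'v \<Rightarrow> 'f \<Rightarrow> ('e \<times> bool) list" where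
  "site_word src tgt bd v f =
     rotate (SOME i. i < length (bd f) \<and> dstart src tgt (bd f ! i) = v) (bd f)"

definition Bsg :: "('g, 'b) monoid_scheme \<Rightarrow> 'e set \<Rightarrow> ('e \<Rightarrow> 'v) \<Rightarrow> ('e \<Rightarrow> 'v) \<Rightarrow>
    ('f \<Rightarrow> ('e \<times> bool) list) \<Rightarrow> 'v \<Rightarrow> 'f \<Rightarrow> 'g \<Rightarrow> ('e, 'g) op" where
  "Bsg G E src tgt bd v f g = diagop G E (\<lambda>y. holonomy G y (site_word src tgt bd v f) = g)"

definition BfK :: "('g, 'b) monoid_scheme \<Rightarrow> 'e set \<Rightarrow> ('e \<Rightarrow> 'v) \<Rightarrow> ('e \<Rightarrow> 'v) \<Rightarrow>
    ('f \<Rightarrow> ('e \<times> bool) list) \<Rightarrow> 'g set \<Rightarrow> 'v \<Rightarrow> 'f \<Rightarrow> ('e, 'g) op" where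
  "BfK G E src tgt bd K v f = (\<lambda>x y. \<Sum>k\<in>K. Bsg G E src tgt bd v f k x y)"

definition Bf :: "('g, 'b) monoid_scheme \<Rightarrow> 'e set \<Rightarrow> ('e \<Rightarrow> 'v) \<Rightarrow> ('e \<Rightarrow> 'v) \<Rightarrow>
    ('f \<Rightarrow> ('e \<times> bool) list) \<Rightarrow> 'v \<Rightarrow> 'f \<Rightarrow> ('e, 'g) op" where
  "Bf G E src tgt bd v f = Bsg G E src tgt bd v f \<one>\<^bsub>G\<^esub>"

text \<open>Edge operators L_e^N and T_e^M (using the triangle with e_tau = e).\<close>
definition LeK :: "('g, 'b) monoid_scheme \<Rightarrow> 'e set \<Rightarrow> 'g set \<Rightarrow> 'e \<Rightarrow> ('e, 'g) op" where
  "LeK G E K e = (\<lambda>x y. (1 / of_nat (card K)) * (\<Sum>n\<in>K. Ltri G E (e, True) n x y))"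

definition TeK :: "('g, 'b) monoid_scheme \<Rightarrow> 'e set \<Rightarrow> 'g set \<Rightarrow> 'e \<Rightarrow> ('e, 'g) op" where
  "TeK G E K e = (\<lambda>x y. \<Sum>m\<in>K. Ttri G E (e, True) m x y)"

text \<open>P := prod_{e in E} T_e^M L_e^N, the product taken along an enumeration es of E.\<close>
definition Pop :: "('g, 'b) monoid_scheme \<Rightarrow> 'e set \<Rightarrow> 'g set \<Rightarrow> 'g set \<Rightarrow> 'e list \<Rightarrow> ('e, 'g) op" where
  "Pop G E M N es = foldr (\<lambda>e Q. opmul G E (opmul G E (TeK G E M e) (LeK G E N e)) Q) es (opid G E)"

end

theory Submission
  imports Defs
begin

text \<open>
  Write \<open>a \<sim> b\<close> (\<open>edge_rel\<close>) when \<open>a \<in> M\<close> and \<open>a b\<inverse> \<in> N\<close>. Multiplying out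
  the commuting edge factors \<open>T_e^M L_e^N\<close> shows that \<open>P\<close> is \<open>|N|^-|E|\<close> times the 0/1 matrix
  relating two configurations iff their values are related on every edge (\<open>Pop_closed_form\<close>).
  Since \<open>N \<subseteq> M\<close>, all edge values of configurations in the support of \<open>P\<close> lie in \<open>M\<close>.

  Vertex part: \<open>A_v^g\<close> multiplies the value of an edge at \<open>v\<close> by \<open>g\<close> (or \<open>g\<inverse>\<close>); if the values
  before and after lie in \<open>M\<close> then \<open>g \<in> M\<close>. So \<open>P A_v^g P = 0\<close> for \<open>g \<notin> M\<close>, and the sum over
  \<open>G\<close> defining \<open>|G| P A_v P\<close> reduces to the sum over \<open>M\<close> defining \<open>|M| P A_v^M P\<close>.

  Face part: for \<open>n \<in> N\<close>, left multiplication of the first dart of the boundary word of \<open>f\<close>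
  by \<open>n\<close> is a bijection of configurations which multiplies the holonomy by \<open>n\<close> and, by
  normality of \<open>N\<close>, leaves \<open>P\<close> invariant on both sides. Hence \<open>P B_s^n P = P B_s^1 P\<close>, and
  summing over \<open>N\<close> gives \<open>P B_f^N P = |N| P B_f P\<close>.
\<close>

definition edge_rel :: "('g, 'b) monoid_scheme \<Rightarrow> 'g set \<Rightarrow> 'g set \<Rightarrow> 'g \<Rightarrow> 'g \<Rightarrow> bool" where
  "edge_rel G M N a b \<longleftrightarrow> a \<in> M \<and> a \<otimes>\<^bsub>G\<^esub> inv\<^bsub>G\<^esub> b \<in> N"

context group begin

lemma subgroup_mult_right_iff:
  assumes "subgroup H G" "h \<in> H" "a \<in> carrier G"
  shows "a \<otimes> h \<in> H \<longleftrightarrow> a \<in> H"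
proof
  assume "a \<otimes> h \<in> H"
  hence "a \<otimes> h \<otimes> inv h \<in> H" using assms by (simp add: subgroup.m_closed subgroup.m_inv_closed)
  thus "a \<in> H" using assms by (simp add: m_assoc subgroup.mem_carrier)
qed (use assms in \<open>simp add: subgroup.m_closed\<close>)

lemma subgroup_mult_left_iff:
  assumes "subgroup H G" "h \<in> H" "a \<in> carrier G"
  shows "h \<otimes> a \<in> H \<longleftrightarrow> a \<in> H"
proof
  assume "h \<otimes> a \<in> H"
  hence "inv h \<otimes> (h \<otimes> a) \<in> H" using assms by (simp add: subgroup.m_closed subgroup.m_inv_closed)
  thus "a \<in> H" using assms by (simp add: m_assoc[symmetric] subgroup.mem_carrier)
qed (use assms in \<open>simp add: subgroup.m_closed\<close>)

lemma subgroup_inv_iff: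
  assumes "subgroup H G" "a \<in> carrier G"
  shows "inv a \<in> H \<longleftrightarrow> a \<in> H"
  using assms subgroup.m_inv_closed by fastforce

lemma normal_insert_iff:
  assumes "N \<lhd> G" "n \<in> N" "a \<in> carrier G" "b \<in> carrier G"
  shows "a \<otimes> n \<otimes> b \<in> N \<longleftrightarrow> a \<otimes> b \<in> N"
proof -
  have sN: "subgroup N G" using assms(1) by (rule normal_imp_subgroup)
  have n: "n \<in> carrier G" using sN assms(2) by (rule subgroup.mem_carrier)
  have "b \<otimes> (inv b \<otimes> n \<otimes> b) = n \<otimes> b"
    using assms n by (simp add: m_assoc[symmetric])
  hence "a \<otimes> n \<otimes> b = (a \<otimes> b) \<otimes> (inv b \<otimes> n \<otimes> b)"
    using assms n by (simp add: m_assoc)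
  thus ?thesis
    using subgroup_mult_right_iff[OF sN normal.inv_op_closed1[OF assms(1,4,2)]] assms by simp
qed

lemma edge_rel_in_subgroup:
  assumes "subgroup M G" "N \<subseteq> M" "edge_rel G M N a b" "b \<in> carrier G"
  shows "a \<in> M" "b \<in> M"
proof -
  show a: "a \<in> M" using assms(3) by (simp add: edge_rel_def)
  have "a \<otimes> inv b \<in> M" using assms(2,3) by (auto simp: edge_rel_def)
  thus "b \<in> M" using assms subgroup_mult_left_iff[OF assms(1) a] subgroup_inv_iff by simp
qed

text \<open>The edge relation only depends on the right cosets modulo \<open>N\<close>: multiplying either
  argument by an element of \<open>N\<close> on the left, or by its inverse on the right, preserves it.\<close>
lemma edge_rel_shift:
  assumes sM: "subgroup M G" and nN: "N \<lhd> G" and NM: "N \<subseteq> M" and n: "n \<in> N"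
    and x: "x \<in> carrier G" and a: "a \<in> carrier G"
  shows "edge_rel G M N x (n \<otimes> a) \<longleftrightarrow> edge_rel G M N x a"
    and "edge_rel G M N x (a \<otimes> inv n) \<longleftrightarrow> edge_rel G M N x a"
    and "edge_rel G M N (n \<otimes> a) x \<longleftrightarrow> edge_rel G M N a x"
    and "edge_rel G M N (a \<otimes> inv n) x \<longleftrightarrow> edge_rel G M N a x"
proof -
  have sN: "subgroup N G" using nN by (rule normal_imp_subgroup)
  have nc: "n \<in> carrier G" using sN n by (rule subgroup.mem_carrier)
  have ninv: "inv n \<in> N" using sN n by (rule subgroup.m_inv_closed)
  have "x \<otimes> inv (n \<otimes> a) = (x \<otimes> inv a) \<otimes> inv n"
    using x a nc by (simp add: inv_mult_group m_assoc)
  thus "edge_rel G M N x (n \<otimes> a) \<longleftrightarrow> edge_rel G M N x a"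
    using subgroup_mult_right_iff[OF sN ninv] x a by (simp add: edge_rel_def)
  have "x \<otimes> inv (a \<otimes> inv n) = x \<otimes> n \<otimes> inv a"
    using x a nc by (simp add: inv_mult_group m_assoc)
  thus "edge_rel G M N x (a \<otimes> inv n) \<longleftrightarrow> edge_rel G M N x a"
    using normal_insert_iff[OF nN n x] a by (simp add: edge_rel_def)
  have "n \<otimes> a \<otimes> inv x = n \<otimes> (a \<otimes> inv x)" using x a nc by (simp add: m_assoc)
  thus "edge_rel G M N (n \<otimes> a) x \<longleftrightarrow> edge_rel G M N a x"
    using subgroup_mult_left_iff[OF sN n] subgroup_mult_left_iff[OF sM] n NM a x
    by (simp add: edge_rel_def subset_iff)
  show "edge_rel G M N (a \<otimes> inv n) x \<longleftrightarrow> edge_rel G M N a x"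
    using normal_insert_iff[OF nN ninv a] subgroup_mult_right_iff[OF sM] ninv NM a x
    by (simp add: edge_rel_def subset_iff)
qed

end

lemma confs_ext: "x \<in> confs G E \<Longrightarrow> y \<in> confs G E \<Longrightarrow> (\<And>e. e \<in> E \<Longrightarrow> x e = y e) \<Longrightarrow> x = y"
  unfolding confs_def by (rule PiE_ext) auto

lemma confs_val: "x \<in> confs G E \<Longrightarrow> e \<in> E \<Longrightarrow> x e \<in> carrier G"
  unfolding confs_def by auto

lemma confs_upd: "x \<in> confs G E \<Longrightarrow> e \<in> E \<Longrightarrow> a \<in> carrier G \<Longrightarrow> x(e := a) \<in> confs G E"
  unfolding confs_def by (auto simp: PiE_iff extensional_def)

lemma finite_confs: "finite E \<Longrightarrow> finite (carrier G) \<Longrightarrow> finite (confs G E)"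
  unfolding confs_def by (rule finite_PiE) auto

section \<open>Closed form of the projector \<open>P\<close>\<close>

text \<open>\<open>rel_op G E M N S k\<close> relates two configurations that agree off \<open>S\<close> and are
  edge-related on \<open>S\<close>, with weight \<open>|N|^-k\<close>. A partial product of the edge factors
  \<open>T_e^M L_e^N\<close> over \<open>k\<close> distinct edges \<open>S\<close> has exactly this matrix.\<close>
definition rel_op :: "('g, 'b) monoid_scheme \<Rightarrow> 'e set \<Rightarrow> 'g set \<Rightarrow> 'g set \<Rightarrow> 'e set \<Rightarrow> nat \<Rightarrow> ('e, 'g) op" where
  "rel_op G E M N S k = (\<lambda>x y. if x \<in> confs G E \<and> y \<in> confs G E \<and> (\<forall>e\<in>E - S. x e = y e)
      \<and> (\<forall>e\<in>S. edge_rel G M N (x e) (y e)) then (1 / of_nat (card N)) ^ k else 0)"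

lemma TeK_closed_form:
  assumes "finite M"
  shows "TeK G E M e x z = (if x \<in> confs G E \<and> z \<in> confs G E \<and> x = z \<and> z e \<in> M then 1 else 0)"
proof (cases "x \<in> confs G E \<and> z \<in> confs G E \<and> x = z")
  case True
  then show ?thesis using assms by (simp add: TeK_def Ttri_def diagop_def dval_def sum.delta')
qed (auto simp: TeK_def Ttri_def diagop_def)

lemma LeK_closed_form:
  assumes "group G" "finite N" "N \<subseteq> carrier G" "e \<in> E"
  shows "LeK G E N e z y = (1 / of_nat (card N)) * (if z \<in> confs G E \<and> y \<in> confs G E
      \<and> (\<forall>e'\<in>E - {e}. z e' = y e') \<and> z e \<otimes>\<^bsub>G\<^esub> inv\<^bsub>G\<^esub> (y e) \<in> N then 1 else 0)"
proof (cases "z \<in> confs G E \<and> y \<in> confs G E")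
  case True
  interpret group G by fact
  have zy: "z e \<in> carrier G" "y e \<in> carrier G" using True assms(4) confs_val by metis+
  have translate_iff: "z = Ldart_map G (e, True) n y \<longleftrightarrow> (\<forall>e'\<in>E - {e}. z e' = y e') \<and> n = z e \<otimes>\<^bsub>G\<^esub> inv\<^bsub>G\<^esub> (y e)"
    if n: "n \<in> N" for n
  proof -
    have nc: "n \<in> carrier G" using n assms(3) by auto
    have "z = Ldart_map G (e, True) n y \<longleftrightarrow> z = y(e := n \<otimes>\<^bsub>G\<^esub> y e)"
      by (simp add: Ldart_map_def)
    also have "\<dots> \<longleftrightarrow> (\<forall>e'\<in>E - {e}. z e' = y e') \<and> z e = n \<otimes>\<^bsub>G\<^esub> y e"
    proof
      assume "(\<forall>e'\<in>E - {e}. z e' = y e') \<and> z e = n \<otimes>\<^bsub>G\<^esub> y e"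
      thus "z = y(e := n \<otimes>\<^bsub>G\<^esub> y e)"
        using confs_ext[of z G E "y(e := n \<otimes>\<^bsub>G\<^esub> y e)"] confs_upd[of y G E e "n \<otimes>\<^bsub>G\<^esub> y e"]
          True assms(4) nc zy by auto
    qed auto
    also have "z e = n \<otimes>\<^bsub>G\<^esub> y e \<longleftrightarrow> n = z e \<otimes>\<^bsub>G\<^esub> inv\<^bsub>G\<^esub> (y e)"
      using nc zy by (metis inv_solve_right)
    finally show ?thesis .
  qed
  have "(\<Sum>n\<in>N. Ltri G E (e, True) n z y)
      = (\<Sum>n\<in>N. if n = z e \<otimes>\<^bsub>G\<^esub> inv\<^bsub>G\<^esub> (y e) then (if \<forall>e'\<in>E - {e}. z e' = y e' then 1 else 0) else 0)"
    using True translate_iff by (intro sum.cong) (auto simp: Ltri_def permop_def)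
  also have "\<dots> = (if (\<forall>e'\<in>E - {e}. z e' = y e') \<and> z e \<otimes>\<^bsub>G\<^esub> inv\<^bsub>G\<^esub> (y e) \<in> N then 1 else 0)"
    using assms(2) by (simp add: sum.delta)
  finally show ?thesis using True by (simp add: LeK_def)
qed (auto simp: LeK_def Ltri_def permop_def)

lemma edge_factor_closed_form:
  assumes "group G" "finite (carrier G)" "finite E" "subgroup M G" "subgroup N G" "e \<in> E"
  shows "opmul G E (TeK G E M e) (LeK G E N e) = rel_op G E M N {e} 1"
proof (intro ext)
  fix x y
  have fin: "finite M" "finite N" "N \<subseteq> carrier G"
    using assms(2,4,5) subgroup.subset finite_subset by metis+
  show "opmul G E (TeK G E M e) (LeK G E N e) x y = rel_op G E M N {e} 1 x y"
  proof (cases "x \<in> confs G E \<and> y \<in> confs G E")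
    case True
    have "(\<Sum>z\<in>confs G E. TeK G E M e x z * LeK G E N e z y)
        = (\<Sum>z\<in>confs G E. if x = z then (if x e \<in> M then LeK G E N e x y else 0) else 0)"
      using True by (intro sum.cong) (auto simp: TeK_closed_form[OF fin(1)])
    also have "\<dots> = (if x e \<in> M then LeK G E N e x y else 0)"
      using True finite_confs[OF assms(3,2)] by (simp add: sum.delta)
    finally show ?thesis using True
      by (auto simp: opmul_def rel_op_def edge_rel_def LeK_closed_form[OF assms(1) fin(2,3) assms(6)])
  qed (auto simp: opmul_def rel_op_def)
qed

text \<open>Multiplying \<open>rel_op\<close> on a new edge \<open>e\<close> with \<open>rel_op\<close> on \<open>S\<close>: the only intermediate
  configuration is \<open>x\<close> with its value at \<open>e\<close> replaced by that of \<open>y\<close>.\<close>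
lemma rel_op_insert:
  assumes "finite (carrier G)" "finite E" "e \<in> E" "e \<notin> S"
  shows "opmul G E (rel_op G E M N {e} 1) (rel_op G E M N S k) = rel_op G E M N (insert e S) (Suc k)"
proof (intro ext)
  fix x y
  show "opmul G E (rel_op G E M N {e} 1) (rel_op G E M N S k) x y = rel_op G E M N (insert e S) (Suc k) x y"
  proof (cases "x \<in> confs G E \<and> y \<in> confs G E")
    case True
    define z0 where "z0 = x(e := y e)"
    have z0: "z0 \<in> confs G E" unfolding z0_def using True assms(3) confs_upd confs_val by metis
    have only_z0: "rel_op G E M N {e} 1 x z * rel_op G E M N S k z y = 0" if "z \<in> confs G E" "z \<noteq> z0" for z
    proof -
      have "\<not> ((\<forall>e'\<in>E - {e}. x e' = z e') \<and> (\<forall>e'\<in>E - S. z e' = y e'))"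
      proof
        assume "(\<forall>e'\<in>E - {e}. x e' = z e') \<and> (\<forall>e'\<in>E - S. z e' = y e')"
        hence "z = z0" using that(1) z0 assms(3,4) by (intro confs_ext) (auto simp: z0_def)
        thus False using that(2) by simp
      qed
      thus ?thesis by (auto simp: rel_op_def)
    qed
    have "(\<Sum>z\<in>confs G E. rel_op G E M N {e} 1 x z * rel_op G E M N S k z y)
        = rel_op G E M N {e} 1 x z0 * rel_op G E M N S k z0 y"
    proof -
      have "(\<Sum>z\<in>confs G E - {z0}. rel_op G E M N {e} 1 x z * rel_op G E M N S k z y) = 0"
        using only_z0 by (intro sum.neutral) blast
      thus ?thesis using z0 finite_confs[OF assms(2,1)] by (simp add: sum.remove[of _ z0])
    qed
    also have "\<dots> = rel_op G E M N (insert e S) (Suc k) x y"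
      using True z0 assms(3,4) by (auto simp: rel_op_def z0_def split: if_splits)
    finally show ?thesis using True by (simp add: opmul_def)
  qed (auto simp: opmul_def rel_op_def)
qed

lemma edge_factors_closed_form:
  assumes "group G" "finite (carrier G)" "finite E" "subgroup M G" "subgroup N G"
    "distinct es" "set es \<subseteq> E"
  shows "foldr (\<lambda>e Q. opmul G E (opmul G E (TeK G E M e) (LeK G E N e)) Q) es (opid G E)
     = rel_op G E M N (set es) (length es)"
  using assms(6,7)
proof (induction es)
  case Nil
  have same: "(\<forall>e\<in>E. x e = y e) \<longleftrightarrow> x = y" if "x \<in> confs G E" "y \<in> confs G E" for x y
    using that confs_ext[of x G E y] by auto
  show ?case by (intro ext) (simp add: opid_def rel_op_def same cong: conj_cong)
next
  case (Cons e es)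
  thus ?case
    using edge_factor_closed_form[OF assms(1-5), of e] rel_op_insert[OF assms(2,3), of e "set es"]
    by simp
qed

lemma Pop_closed_form:
  assumes "group G" "finite (carrier G)" "finite E" "subgroup M G" "subgroup N G"
    "distinct es" "set es = E"
  shows "Pop G E M N es = rel_op G E M N E (card E)"
  using edge_factors_closed_form[OF assms(1-6)] assms(6,7) distinct_card[OF assms(6)]
  by (simp add: Pop_def)

lemma sandwich_entry:
  assumes "x \<in> confs G E" "y \<in> confs G E"
  shows "opmul G E (opmul G E P A) Q x y = (\<Sum>w\<in>confs G E. \<Sum>z\<in>confs G E. P x z * A z w * Q w y)"
  using assms by (auto simp: opmul_def sum_distrib_right intro!: sum.cong)

lemma sandwich_sum:
  "opmul G E (opmul G E P (\<lambda>x y. c * (\<Sum>k\<in>K. A k x y))) Q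
     = (\<lambda>x y. c * (\<Sum>k\<in>K. opmul G E (opmul G E P (A k)) Q x y))"
proof (intro ext)
  fix x y
  show "opmul G E (opmul G E P (\<lambda>x y. c * (\<Sum>k\<in>K. A k x y))) Q x y
     = c * (\<Sum>k\<in>K. opmul G E (opmul G E P (A k)) Q x y)"
  proof (cases "x \<in> confs G E \<and> y \<in> confs G E")
    case True
    have "opmul G E (opmul G E P (\<lambda>x y. c * (\<Sum>k\<in>K. A k x y))) Q x y
        = (\<Sum>w\<in>confs G E. \<Sum>z\<in>confs G E. \<Sum>k\<in>K. c * (P x z * A k z w * Q w y))"
      using True by (simp add: sandwich_entry sum_distrib_left sum_distrib_right mult_ac)
    also have "\<dots> = c * (\<Sum>k\<in>K. \<Sum>w\<in>confs G E. \<Sum>z\<in>confs G E. P x z * A k z w * Q w y)"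
      by (simp add: sum_distrib_left sum.swap[of _ K])
    finally show ?thesis using True by (simp add: sandwich_entry)
  qed (auto simp: opmul_def)
qed

section \<open>The vertex term\<close>

lemma (in group) vertex_map_subgroup:
  assumes "subgroup M G" "e \<in> E" "src e = v \<or> tgt e = v" "g \<in> carrier G"
    and "w e \<in> M" "vertex_map G E src tgt v g w e \<in> M"
  shows "g \<in> M"
proof -
  have w: "w e \<in> carrier G" using assms(1,5) subgroup.mem_carrier by metis
  show ?thesis
  proof (cases "src e = v")
    case True
    thus ?thesis using assms subgroup_mult_right_iff[OF assms(1,5,4)] by (simp add: vertex_map_def)
  next
    case False
    hence "inv (g \<otimes> inv (w e)) \<in> M" using assms by (simp add: vertex_map_def)
    hence "g \<otimes> inv (w e) \<in> M" using subgroup_inv_iff[OF assms(1)] assms(4) w by simp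
    thus ?thesis
      using subgroup_mult_right_iff[OF assms(1) subgroup.m_inv_closed[OF assms(1,5)] assms(4)] by simp
  qed
qed

text \<open>Sandwiched between \<open>P\<close>, the vertex operator \<open>A_v^g\<close> vanishes for \<open>g \<notin> M\<close>: every
  configuration in the range of \<open>P\<close> has all its edge values in \<open>M\<close>.\<close>
lemma sandwich_vertex_outside_subgroup:
  assumes "group G" "subgroup M G" "N \<subseteq> M" "e0 \<in> E" "src e0 = v \<or> tgt e0 = v"
    and "g \<in> carrier G" "g \<notin> M"
  shows "opmul G E (opmul G E (rel_op G E M N E k) (Avg G E src tgt v g)) (rel_op G E M N E k) = (\<lambda>x y. 0)"
proof -
  interpret group G by fact
  have vanish: "rel_op G E M N E k x z * Avg G E src tgt v g z w * rel_op G E M N E k w y = 0" for x z w y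
  proof (rule ccontr)
    assume "rel_op G E M N E k x z * Avg G E src tgt v g z w * rel_op G E M N E k w y \<noteq> 0"
    hence xz: "z \<in> confs G E" "edge_rel G M N (x e0) (z e0)"
      and wy: "y \<in> confs G E" "edge_rel G M N (w e0) (y e0)"
      and zw: "z = vertex_map G E src tgt v g w"
      using assms(4) by (auto simp: rel_op_def Avg_def permop_def split: if_splits)
    have "z e0 \<in> M" using edge_rel_in_subgroup[OF assms(2,3) xz(2)] confs_val[OF xz(1) assms(4)] by blast
    moreover have "w e0 \<in> M" using edge_rel_in_subgroup[OF assms(2,3) wy(2)] confs_val[OF wy(1) assms(4)] by blast
    ultimately have "g \<in> M" using vertex_map_subgroup[of M e0 E src v tgt g w] assms zw by blast
    thus False using assms(7) by contradiction
  qed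
  show ?thesis
  proof (intro ext)
    fix x y
    show "opmul G E (opmul G E (rel_op G E M N E k) (Avg G E src tgt v g)) (rel_op G E M N E k) x y = 0"
    proof (cases "x \<in> confs G E \<and> y \<in> confs G E")
      case True
      thus ?thesis by (simp add: sandwich_entry vanish)
    qed (auto simp: opmul_def)
  qed
qed

lemma sandwich_vertex_average:
  fixes k :: nat
  assumes "group G" "finite (carrier G)" "subgroup M G" "N \<subseteq> M" "v \<in> vertices E src tgt"
  defines "P \<equiv> rel_op G E M N E k"
  shows "smul (of_nat (card M)) (opmul G E (opmul G E P (AvK G E src tgt M v)) P)
       = smul (of_nat (card (carrier G))) (opmul G E (opmul G E P (Av G E src tgt v)) P)"
proof -
  obtain e0 where e0: "e0 \<in> E" "src e0 = v \<or> tgt e0 = v"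
    using assms(5) by (auto simp: vertices_def)
  define S where "S g = opmul G E (opmul G E P (Avg G E src tgt v g)) P" for g
  have average: "smul (of_nat (card K)) (opmul G E (opmul G E P (AvK G E src tgt K v)) P)
      = (\<lambda>x y. \<Sum>g\<in>K. S g x y)" if "card K > 0" for K
    using that unfolding AvK_def sandwich_sum by (simp add: smul_def S_def)
  have "(\<Sum>g\<in>carrier G. S g x y) = (\<Sum>g\<in>M. S g x y)" for x y
    using assms(2) subgroup.subset[OF assms(3)]
      sandwich_vertex_outside_subgroup[OF assms(1,3,4) e0(1), where src = src and tgt = tgt and v = v]
      e0(2) unfolding S_def P_def
    by (intro sum.mono_neutral_right) auto
  moreover have "card M > 0" "card (carrier G) > 0"
    using subgroup.finite_imp_card_positive[OF assms(3,2)]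
      subgroup.finite_imp_card_positive[OF group.subgroup_self[OF assms(1)] assms(2)] by auto
  ultimately show ?thesis by (simp add: average Av_def)
qed

section \<open>The face term\<close>

lemma holonomy_cong:
  "(\<And>d. d \<in> set ds \<Longrightarrow> z (fst d) = z' (fst d)) \<Longrightarrow> holonomy G z ds = holonomy G z' ds"
  by (induction ds) (auto simp: holonomy_def dval_def)

lemma holonomy_closed:
  assumes "group G" "z \<in> confs G E" "set ds \<subseteq> E \<times> UNIV"
  shows "holonomy G z ds \<in> carrier G"
  using assms(3) by (induction ds)
    (auto simp: holonomy_def dval_def confs_val[OF assms(2)] group.inv_closed[OF assms(1)]
      monoid.m_closed[OF group.is_monoid[OF assms(1)]] monoid.one_closed[OF group.is_monoid[OF assms(1)]])

lemma lattice_finite_edges: "lattice E src tgt F bd \<Longrightarrow> finite E"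
  by (simp add: lattice_def)

lemma site_word_first_dart:
  assumes "lattice E src tgt F bd" "f \<in> F"
  shows "\<exists>d ds. site_word src tgt bd v f = d # ds \<and> fst d \<in> E \<and> set ds \<subseteq> E \<times> UNIV
    \<and> (\<forall>d'\<in>set ds. fst d' \<noteq> fst d)"
proof -
  define sw where "sw = site_word src tgt bd v f"
  have bd: "bd f \<noteq> []" "set (bd f) \<subseteq> E \<times> UNIV" "distinct (bd f)"
    "\<And>e. \<not> ((e, True) \<in> set (bd f) \<and> (e, False) \<in> set (bd f))"
    using assms distinct_map by (fastforce simp: lattice_def)+
  hence sw: "sw \<noteq> []" "set sw \<subseteq> E \<times> UNIV" "distinct sw"
    "\<And>e. \<not> ((e, True) \<in> set sw \<and> (e, False) \<in> set sw)"
    by (auto simp: sw_def site_word_def)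
  then obtain d ds where dds: "sw = d # ds" by (cases sw) auto
  have "fst d' \<noteq> fst d" if d': "d' \<in> set ds" for d'
  proof
    assume eq: "fst d' = fst d"
    have "d' \<noteq> d" using sw(3) dds d' by auto
    hence "{(fst d, True), (fst d, False)} \<subseteq> set sw" using eq d' dds
      by (cases d; cases d'; cases "snd d") auto
    thus False using sw(4) by blast
  qed
  thus ?thesis using dds sw(2) by (auto simp: sw_def)
qed

text \<open>Left multiplication of the value of the dart \<open>d\<close> by \<open>n\<close> (for an inverse edge this is
  right multiplication of the edge value by \<open>n\<inverse>\<close>).\<close>
definition dart_shift :: "('g, 'b) monoid_scheme \<Rightarrow> 'e \<times> bool \<Rightarrow> 'g \<Rightarrow> ('e \<Rightarrow> 'g) \<Rightarrow> ('e \<Rightarrow> 'g)" where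
  "dart_shift G d n a = a(fst d := if snd d then n \<otimes>\<^bsub>G\<^esub> a (fst d) else a (fst d) \<otimes>\<^bsub>G\<^esub> inv\<^bsub>G\<^esub> n)"

lemma dart_shift_confs:
  assumes "group G" "a \<in> confs G E" "fst d \<in> E" "n \<in> carrier G"
  shows "dart_shift G d n a \<in> confs G E"
  using assms confs_val[OF assms(2,3)]
  by (simp add: dart_shift_def confs_upd group.inv_closed monoid.m_closed group.is_monoid)

lemma (in group) dart_shift_bij:
  assumes "fst d \<in> E" "n \<in> carrier G"
  shows "bij_betw (dart_shift G d n) (confs G E) (confs G E)"
proof (rule bij_betw_byWitness[where f' = "dart_shift G d (inv n)"])
  have inverse: "dart_shift G d (inv m) (dart_shift G d m a) = a"
    if "a \<in> confs G E" "m \<in> carrier G" for a m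
    using that confs_val[OF that(1) assms(1)] by (auto simp: dart_shift_def m_assoc[symmetric] m_assoc)
  show "\<forall>a\<in>confs G E. dart_shift G d (inv n) (dart_shift G d n a) = a"
    using inverse assms(2) by blast
  show "\<forall>a\<in>confs G E. dart_shift G d n (dart_shift G d (inv n) a) = a"
    using inverse[of _ "inv n"] assms(2) by simp
  show "dart_shift G d n ` confs G E \<subseteq> confs G E" "dart_shift G d (inv n) ` confs G E \<subseteq> confs G E"
    using dart_shift_confs[OF is_group _ assms(1)] assms(2) by auto
qed

lemma (in group) holonomy_dart_shift:
  assumes "a \<in> confs G E" "fst d \<in> E" "set ds \<subseteq> E \<times> UNIV"
    and "\<And>d'. d' \<in> set ds \<Longrightarrow> fst d' \<noteq> fst d" and "n \<in> carrier G"
  shows "holonomy G (dart_shift G d n a) (d # ds) = n \<otimes> holonomy G a (d # ds)"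
proof -
  have rest: "holonomy G (dart_shift G d n a) ds = holonomy G a ds"
    using assms(4) by (intro holonomy_cong) (auto simp: dart_shift_def)
  have a: "a (fst d) \<in> carrier G" using assms(1,2) by (rule confs_val)
  have first: "dval G (dart_shift G d n a) d = n \<otimes> dval G a d"
    using a assms(5) by (auto simp: dart_shift_def dval_def inv_mult_group)
  show ?thesis using rest first a assms(5) holonomy_closed[OF is_group assms(1,3)]
    by (simp add: holonomy_def dval_def m_assoc)
qed

lemma (in group) rel_op_dart_shift:
  assumes "subgroup M G" "N \<lhd> G" "N \<subseteq> M" "n \<in> N" "fst d \<in> E" "a \<in> confs G E"
  shows "rel_op G E M N E k x (dart_shift G d n a) = rel_op G E M N E k x a"
    and "rel_op G E M N E k (dart_shift G d n a) y = rel_op G E M N E k a y"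
proof -
  have n: "n \<in> carrier G" using assms(2,4) normal_imp_subgroup subgroup.mem_carrier by metis
  have shifted: "dart_shift G d n a \<in> confs G E" using dart_shift_confs[OF is_group assms(6,5) n] .
  have a: "a (fst d) \<in> carrier G" using assms(5,6) confs_val by metis
  have left: "edge_rel G M N (x e) (dart_shift G d n a e) = edge_rel G M N (x e) (a e)"
    if "x e \<in> carrier G" for e
    using edge_rel_shift(1,2)[OF assms(1-4) that a] by (cases "e = fst d") (auto simp: dart_shift_def)
  have right: "edge_rel G M N (dart_shift G d n a e) (y e) = edge_rel G M N (a e) (y e)"
    if "y e \<in> carrier G" for e
    using edge_rel_shift(3,4)[OF assms(1-4) that a] by (cases "e = fst d") (auto simp: dart_shift_def)
  show "rel_op G E M N E k x (dart_shift G d n a) = rel_op G E M N E k x a"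
    using left shifted assms(6) confs_val[of x G E] by (auto simp: rel_op_def)
  show "rel_op G E M N E k (dart_shift G d n a) y = rel_op G E M N E k a y"
    using right shifted assms(6) confs_val[of y G E] by (auto simp: rel_op_def)
qed

lemma sandwich_diagop_entry:
  assumes "finite (confs G E)" "x \<in> confs G E" "y \<in> confs G E"
  shows "opmul G E (opmul G E P (diagop G E p)) Q x y
       = (\<Sum>a\<in>confs G E. P x a * (if p a then 1 else 0) * Q a y)"
proof -
  have "(\<Sum>z\<in>confs G E. P x z * diagop G E p z a * Q a y) = P x a * (if p a then 1 else 0) * Q a y"
    if "a \<in> confs G E" for a
    using that assms(1) by (simp add: diagop_def if_distrib if_distribR sum.delta' cong: if_cong)
  thus ?thesis using assms(2,3) by (simp add: sandwich_entry)
qed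

lemma diagop_cong: "(\<And>a. a \<in> confs G E \<Longrightarrow> p a = q a) \<Longrightarrow> diagop G E p = diagop G E q"
  by (auto simp: diagop_def fun_eq_iff)

lemma sandwich_diagop_reindex:
  assumes "finite (confs G E)" "bij_betw \<sigma> (confs G E) (confs G E)"
    and "\<And>x a. a \<in> confs G E \<Longrightarrow> P x (\<sigma> a) = P x a"
    and "\<And>a y. a \<in> confs G E \<Longrightarrow> P (\<sigma> a) y = P a y"
  shows "opmul G E (opmul G E P (diagop G E (\<lambda>a. p (\<sigma> a)))) P = opmul G E (opmul G E P (diagop G E p)) P"
proof (intro ext)
  fix x y
  show "opmul G E (opmul G E P (diagop G E (\<lambda>a. p (\<sigma> a)))) P x y = opmul G E (opmul G E P (diagop G E p)) P x y"
  proof (cases "x \<in> confs G E \<and> y \<in> confs G E")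
    case True
    have "(\<Sum>a\<in>confs G E. P x a * (if p (\<sigma> a) then 1 else 0) * P a y)
        = (\<Sum>a\<in>confs G E. P x (\<sigma> a) * (if p (\<sigma> a) then 1 else 0) * P (\<sigma> a) y)"
      using assms(3,4) by simp
    also have "\<dots> = (\<Sum>b\<in>confs G E. P x b * (if p b then 1 else 0) * P b y)"
      using assms(2) by (rule sum.reindex_bij_betw)
    finally show ?thesis using True assms(1) by (simp add: sandwich_diagop_entry)
  qed (auto simp: opmul_def)
qed

text \<open>The shift of the first
  dart of the boundary word by \<open>n\<close> turns the flux condition \<open>1\<close> into \<open>n\<close> and fixes \<open>P\<close>.\<close>
lemma sandwich_face_shift:
  fixes k :: nat
  assumes "group G" "finite (carrier G)" "subgroup M G" "N \<lhd> G" "N \<subseteq> M"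
    and "lattice E src tgt F bd" "f \<in> F" "n \<in> N"
  defines "P \<equiv> rel_op G E M N E k"
  shows "opmul G E (opmul G E P (Bsg G E src tgt bd v f n)) P
       = opmul G E (opmul G E P (Bsg G E src tgt bd v f \<one>\<^bsub>G\<^esub>)) P"
proof -
  interpret group G by fact
  obtain d ds where sw: "site_word src tgt bd v f = d # ds" and d: "fst d \<in> E"
    and ds: "set ds \<subseteq> E \<times> UNIV" "\<forall>d'\<in>set ds. fst d' \<noteq> fst d"
    using site_word_first_dart[OF assms(6,7), where v = v] by blast
  have n: "n \<in> carrier G" using subgroup.mem_carrier[OF normal_imp_subgroup[OF assms(4)] assms(8)] .
  have fin: "finite (confs G E)" using finite_confs[OF lattice_finite_edges[OF assms(6)] assms(2)] .
  have "holonomy G (dart_shift G d n a) (d # ds) = n \<longleftrightarrow> holonomy G a (d # ds) = \<one>\<^bsub>G\<^esub>"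
    if "a \<in> confs G E" for a
  proof -
    have "set (d # ds) \<subseteq> E \<times> UNIV" using d ds(1) by (cases d) auto
    hence h: "holonomy G a (d # ds) \<in> carrier G" using holonomy_closed[OF assms(1) that] by blast
    show ?thesis by (simp only: holonomy_dart_shift[OF that d ds(1) bspec[OF ds(2)] n] l_cancel_one[OF n h])
  qed
  hence pulled_back: "Bsg G E src tgt bd v f \<one>\<^bsub>G\<^esub>
      = diagop G E (\<lambda>a. holonomy G (dart_shift G d n a) (site_word src tgt bd v f) = n)"
    unfolding Bsg_def sw by (intro diagop_cong) simp
  have "opmul G E (opmul G E P (diagop G E (\<lambda>a. holonomy G (dart_shift G d n a) (site_word src tgt bd v f) = n))) P
      = opmul G E (opmul G E P (Bsg G E src tgt bd v f n)) P"
    unfolding Bsg_def P_def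
    using fin dart_shift_bij[OF d n] rel_op_dart_shift[OF assms(3,4,5,8) d]
    by (rule sandwich_diagop_reindex)
  thus ?thesis by (simp only: pulled_back)
qed

lemma sandwich_face_average:
  fixes k :: nat
  assumes "group G" "finite (carrier G)" "subgroup M G" "N \<lhd> G" "N \<subseteq> M"
    and "lattice E src tgt F bd" "f \<in> F"
  defines "P \<equiv> rel_op G E M N E k"
  shows "opmul G E (opmul G E P (BfK G E src tgt bd N v f)) P
       = smul (of_nat (card N)) (opmul G E (opmul G E P (Bf G E src tgt bd v f)) P)"
proof -
  have "BfK G E src tgt bd N v f = (\<lambda>x y. 1 * (\<Sum>n\<in>N. Bsg G E src tgt bd v f n x y))"
    by (simp add: BfK_def)
  hence "opmul G E (opmul G E P (BfK G E src tgt bd N v f)) P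
      = (\<lambda>x y. 1 * (\<Sum>n\<in>N. opmul G E (opmul G E P (Bsg G E src tgt bd v f n)) P x y))"
    by (simp only: sandwich_sum)
  thus ?thesis
    using sandwich_face_shift[OF assms(1-7), of _ k v] unfolding P_def
    by (simp add: smul_def Bf_def)
qed

theorem mainTheorem11:
  fixes G :: "'g monoid" and M N :: "'g set"
    and E :: "'e set" and src tgt :: "'e \<Rightarrow> 'v" and F :: "'f set"
    and bd :: "'f \<Rightarrow> ('e \<times> bool) list" and es :: "'e list"
  assumes "group G" and "finite (carrier G)"
    and "subgroup M G" and "N \<lhd> G" and "N \<subseteq> M"
    and "lattice E src tgt F bd"
    and "distinct es" and "set es = E"
  shows "(\<forall>v \<in> vertices E src tgt.
            smul (of_nat (card M))
              (opmul G E (opmul G E (Pop G E M N es) (AvK G E src tgt M v)) (Pop G E M N es))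
          = smul (of_nat (card (carrier G)))
              (opmul G E (opmul G E (Pop G E M N es) (Av G E src tgt v)) (Pop G E M N es)))
       \<and> (\<forall>f \<in> F. \<forall>v \<in> set (map (dstart src tgt) (bd f)).
            opmul G E (opmul G E (Pop G E M N es) (BfK G E src tgt bd N v f)) (Pop G E M N es)
          = smul (of_nat (card N))
              (opmul G E (opmul G E (Pop G E M N es) (Bf G E src tgt bd v f)) (Pop G E M N es)))"
proof -
  have P: "Pop G E M N es = rel_op G E M N E (card E)"
    using assms(1,2) lattice_finite_edges[OF assms(6)] assms(3) normal_imp_subgroup[OF assms(4)] assms(7,8)
    by (rule Pop_closed_form)
  show ?thesis unfolding P
    by (intro conjI ballI sandwich_vertex_average[OF assms(1-3,5)] sandwich_face_average[OF assms(1-6)])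
qed

end
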